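(* For every matrix $A=[a_{ij}]_{i,j=1}^2\in\mathbb{C}^{2\times 2}$, writing $s=\operatorname{tr}A$ and $p=\det A$: (i) $\mu_E(A)<1$ if and only if $(s,p)\in\mathbb{G}$ and $\displaystyle |a_{21}|\sup_{z\in\mathbb{D}}\frac{1-|z|^2}{|1-sz+pz^2|}<1$; (ii) $\mu_E(A)\le 1$ if and only if $(s,p)\in\Gamma$ and $\displaystyle \frac{|a_{21}|(1-|z|^2)}{|1-sz+pz^2|}\le 1$ for all $z\in\mathbb{D}$.
   Context: $\mathbb{D}$ is the open unit disc in $\mathbb{C}$. The symmetrised bidisc is $\mathbb{G}=\{(z+w,zw): |z|<1,|w|<1\}\subset\mathbb{C}^2$ and $\Gamma=\{(z+w,zw):|z|\le1,|w|\le1\}$ is its closure. Let $E=\operatorname{span}\{I, \begin{pmatrix}0&1\\0&0\end{pmatrix}\}\subset\mathbb{C}^{2\times2}$, i.e. $E$ consists of the matrices $\begin{pmatrix}z&w\\0&z\end{pmatrix}$, $z,w\in\mathbb{C}$. For $A\in\mathbb{C}^{2\times2}$ the structured singular value $\mu_E(A)$ is defined by $1/\mu_E(A)=\inf\{\|X\|: X\in E,\ \det(I-AX)=0\}$ (operator norm; with $\mu_E(A)=0$ if no such $X$ exists). *)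

theory Defs
  imports "HOL-Analysis.Analysis"
begin

definition unit_disc :: "complex set" where
  "unit_disc = {z. cmod z < 1}"

definition symm_bidisc :: "(complex \<times> complex) set" where
  "symm_bidisc = {(z + w, z * w) | z w. cmod z < 1 \<and> cmod w < 1}"

definition symm_bidisc_closed :: "(complex \<times> complex) set" where
  "symm_bidisc_closed = {(z + w, z * w) | z w. cmod z \<le> 1 \<and> cmod w \<le> 1}"

text \<open>The space E of 2x2 matrices of the form [[z,w],[0,z]].
  Indices of the type 2: 1 is the first index, 2 the second.\<close>
definition spaceE :: "(complex^2^2) set" where
  "spaceE = {(\<chi> i j. if i = j then z else if i = 1 \<and> j = 2 then w else 0) | z w. True}"

definition mat_opnorm :: "complex^2^2 \<Rightarrow> real" where
  "mat_opnorm X = onorm (\<lambda>v. X *v v)"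

definition muE :: "complex^2^2 \<Rightarrow> real" where
  "muE A = (let S = {mat_opnorm X | X. X \<in> spaceE \<and> det (mat 1 - A ** X) = 0}
            in if S = {} then 0 else 1 / Inf S)"

end

theory Submission
  imports Defs
begin

(*
  Every X in E has the form Emat z w = [[z, w], [0, z]], and
    det (I - A X) = 1 - s z + p z^2 - a21 w      (s = trace A, p = det A),
  while the operator norm of Emat z w is the positive root r(|z|,|w|) of
  r^2 = |w| r + |z|^2; in particular r >= 1 iff |w| + |z|^2 >= 1.  Since the
  minimum of r over the (closed) solution set of a21 w = 1 - s z + p z^2 is
  attained, mu_E(A) < 1 (resp. <= 1) iff every solution has |w| + |z|^2 > 1
  (resp. >= 1).  Solving for w, this becomes a pointwise comparison of
  |a21| (1 - |z|^2) with |1 - s z + p z^2| on the closed (resp. open) unit disc.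
  Writing 1 - s z + p z^2 = (1 - alpha z)(1 - beta z), alpha + beta = s,
  alpha beta = p, shows that nonvanishing on the closed (open) disc means
  (s,p) in G (Gamma), and a compactness argument turns the strict pointwise
  bound into the bound on the supremum.
*)

section \<open>The matrices of E and their operator norm\<close>

definition Emat :: "complex \<Rightarrow> complex \<Rightarrow> complex^2^2" where
  "Emat z w = (\<chi> i j. if i = j then z else if i = 1 \<and> j = 2 then w else 0)"

lemma spaceE_eq: "spaceE = {Emat z w | z w. True}"
  unfolding spaceE_def Emat_def by auto

lemma det_one_minus_mult_Emat:
  "det (mat 1 - A ** Emat z w) = 1 - trace A * z + det A * z^2 - A$2$1 * w"
  unfolding det_2 trace_def sum_2 Emat_def
  by (simp add: matrix_matrix_mult_def sum_2 mat_def algebra_simps power2_eq_square)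

lemma norm_vec2: "norm (v::complex^2) = sqrt ((cmod (v$1))^2 + (cmod (v$2))^2)"
  unfolding norm_vec_def L2_set_def sum_2 by simp

lemma Emat_mult_vec: "(Emat z w *v v) $ 1 = z * v$1 + w * v$2" "(Emat z w *v v) $ 2 = z * v$2"
  unfolding Emat_def by (simp_all add: matrix_vector_mult_def sum_2)

text \<open>The norm of [[z,w],[0,z]] as a function of a = |z| and b = |w|: the
  nonnegative root of r^2 = b r + a^2.\<close>
definition em_norm :: "real \<Rightarrow> real \<Rightarrow> real" where
  "em_norm a b = (b + sqrt (b^2 + 4*a^2)) / 2"

lemma em_norm_root: "(em_norm a b)^2 = b * em_norm a b + a^2"
proof -
  have "(sqrt (b^2 + 4*a^2))^2 = b^2 + 4*a^2" by simp
  then show ?thesis unfolding em_norm_def by (simp add: power2_eq_square field_simps)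
qed

lemma em_norm_bounds:
  assumes "a \<ge> 0" "b \<ge> 0"
  shows "a \<le> em_norm a b" "b \<le> em_norm a b"
proof -
  have "b \<le> sqrt (b^2 + 4*a^2)" "2*a \<le> sqrt (b^2 + 4*a^2)"
    by (simp_all add: real_le_rsqrt power_mult_distrib)
  then show "a \<le> em_norm a b" "b \<le> em_norm a b" unfolding em_norm_def using assms by simp_all
qed

lemma em_norm_cmod_bounds:
  "cmod z \<le> em_norm (cmod z) (cmod w)" "cmod w \<le> em_norm (cmod z) (cmod w)"
  "0 \<le> em_norm (cmod z) (cmod w)"
proof -
  show lower: "cmod z \<le> em_norm (cmod z) (cmod w)" by (simp add: em_norm_bounds)
  show "cmod w \<le> em_norm (cmod z) (cmod w)" by (simp add: em_norm_bounds)
  show "0 \<le> em_norm (cmod z) (cmod w)" using lower norm_ge_zero[of z] by linarith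
qed

text \<open>Comparing em_norm with a positive threshold t only requires evaluating the
  quadratic r^2 - b r - a^2 at t, since its other root is nonpositive.\<close>
lemma em_norm_threshold:
  assumes "a \<ge> 0" "b \<ge> 0" "t > 0"
  shows "t \<le> em_norm a b \<longleftrightarrow> t^2 \<le> b * t + a^2"
    and "t < em_norm a b \<longleftrightarrow> t^2 < b * t + a^2"
proof -
  let ?r = "em_norm a b"
  have factor: "t^2 - b * t - a^2 = (t - ?r) * (t + ?r - b)"
    using em_norm_root[of a b] by (simp add: algebra_simps power2_eq_square)
  have pos: "t + ?r - b > 0" using em_norm_bounds[OF assms(1,2)] assms(3) by linarith
  show "t \<le> ?r \<longleftrightarrow> t^2 \<le> b * t + a^2"
    using factor pos by (smt (verit) mult_le_0_iff mult_pos_pos)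
  show "t < ?r \<longleftrightarrow> t^2 < b * t + a^2"
    using factor pos by (smt (verit) mult_less_0_iff mult_nonneg_nonneg)
qed

text \<open>The quadratic inequality behind the upper bound for the norm of Emat:
  r D = b (r x - a y)^2 where D is the defect of the inequality.\<close>
lemma em_norm_quadratic_bound:
  fixes a b x y :: real
  assumes "a \<ge> 0" "b \<ge> 0" "x \<ge> 0" "y \<ge> 0"
  shows "(a*x + b*y)^2 + a^2*y^2 \<le> (em_norm a b)^2 * (x^2 + y^2)"
proof -
  let ?r = "em_norm a b"
  define D where "D = ?r^2 * (x^2 + y^2) - ((a*x + b*y)^2 + a^2*y^2)"
  have "?r * D - b * (?r*x - a*y)^2 = (?r*x^2 + (?r + b)*y^2) * (?r^2 - b*?r - a^2)"
    unfolding D_def by algebra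
  then have rD: "?r * D = b * (?r*x - a*y)^2" using em_norm_root[of a b] by simp
  show ?thesis
  proof (cases "?r = 0")
    case True
    then have "a = 0" "b = 0" using em_norm_bounds[OF assms(1,2)] assms(1,2) by linarith+
    then show ?thesis using True by simp
  next
    case False
    then have "?r > 0" using em_norm_bounds[OF assms(1,2)] assms(1) by linarith
    moreover have "?r * D \<ge> 0" using rD assms(2) by simp
    ultimately have "D \<ge> 0" by (simp add: zero_le_mult_iff)
    then show ?thesis unfolding D_def by simp
  qed
qed

text \<open>Upper bound: the first component z v1 + w v2 is estimated by the triangle
  inequality, then the quadratic bound applies to x = |v1|, y = |v2|.\<close>
lemma Emat_norm_le: "norm (Emat z w *v v) \<le> em_norm (cmod z) (cmod w) * norm v"
proof -
  let ?a = "cmod z" and ?b = "cmod w" and ?x = "cmod (v$1)" and ?y = "cmod (v$2)"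
  let ?r = "em_norm ?a ?b"
  have "?r \<ge> 0" using em_norm_cmod_bounds(3) .
  have "cmod (z * v$1 + w * v$2) \<le> ?a * ?x + ?b * ?y"
    by (metis norm_mult norm_triangle_ineq)
  then have "(cmod (z * v$1 + w * v$2))^2 \<le> (?a * ?x + ?b * ?y)^2"
    by (simp add: power_mono)
  also have "\<dots> \<le> ?r^2 * (?x^2 + ?y^2) - ?a^2 * ?y^2"
    using em_norm_quadratic_bound[of ?a ?b ?x ?y] by simp
  finally have "(cmod (z * v$1 + w * v$2))^2 + (cmod (z * v$2))^2 \<le> ?r^2 * (?x^2 + ?y^2)"
    by (simp add: norm_mult power_mult_distrib)
  then have "sqrt ((cmod (z * v$1 + w * v$2))^2 + (cmod (z * v$2))^2) \<le> sqrt (?r^2 * (?x^2 + ?y^2))"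
    by (rule real_sqrt_le_mono)
  also have "\<dots> = ?r * sqrt (?x^2 + ?y^2)" using \<open>?r \<ge> 0\<close> by (simp add: real_sqrt_mult)
  finally show ?thesis unfolding norm_vec2[of v] norm_vec2[of "Emat z w *v v"] Emat_mult_vec .
qed

text \<open>The bound is sharp: a maximising vector is (0,1) if w = 0 and
  (conj z * w/|w|, r) otherwise.\<close>
lemma Emat_norm_attained:
  obtains v where "v \<noteq> 0" "norm (Emat z w *v v) = em_norm (cmod z) (cmod w) * norm v"
proof (cases "w = 0")
  case True
  let ?v = "vector [0, 1] :: complex^2"
  have "?v $ 2 \<noteq> 0" by simp
  then have "?v \<noteq> 0" by (metis zero_index)
  moreover have "em_norm (cmod z) (cmod w) = cmod z"
    using True unfolding em_norm_def by (simp add: real_sqrt_mult)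
  ultimately show ?thesis using that True by (simp add: norm_vec2 Emat_mult_vec)
next
  case False
  let ?a = "cmod z" and ?b = "cmod w"
  let ?r = "em_norm ?a ?b"
  define u where "u = w / of_real ?b"
  let ?v = "vector [cnj z * u, of_real ?r] :: complex^2"
  have "0 < ?b" using False by simp
  then have "?r > 0" using em_norm_cmod_bounds(2)[where z=z and w=w] by linarith
  then have "?v $ 2 \<noteq> 0" by simp
  then have "?v \<noteq> 0" by (metis zero_index)
  have u: "cmod u = 1" "w = u * of_real ?b" using False unfolding u_def by (simp_all add: norm_divide)
  have "z * (cnj z * u) + w * of_real ?r = (z * cnj z) * u + (u * of_real ?b) * of_real ?r"
    using u(2) by (simp add: mult.assoc)
  also have "\<dots> = u * of_real (?a^2 + ?b * ?r)"
    unfolding complex_norm_square[symmetric] by (simp add: algebra_simps)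
  also have "\<dots> = u * of_real (?r^2)" using em_norm_root[of ?a ?b] by simp
  finally have first: "cmod (z * (cnj z * u) + w * of_real ?r) = ?r^2"
    using u(1) by (simp add: norm_mult norm_power)
  have "norm (Emat z w *v ?v) = sqrt ((?r^2)^2 + (?a * ?r)^2)"
    unfolding norm_vec2 Emat_mult_vec vector_2 first using \<open>?r > 0\<close> by (simp add: norm_mult)
  also have "\<dots> = sqrt (?r^2 * (?a^2 + ?r^2))" by (simp add: algebra_simps power2_eq_square)
  also have "\<dots> = ?r * norm ?v"
    unfolding norm_vec2 vector_2 using u(1) \<open>?r > 0\<close> by (simp add: norm_mult real_sqrt_mult)
  finally show ?thesis using that \<open>?v \<noteq> 0\<close> by blast
qed

lemma mat_opnorm_Emat: "mat_opnorm (Emat z w) = em_norm (cmod z) (cmod w)"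
proof (rule antisym)
  show "mat_opnorm (Emat z w) \<le> em_norm (cmod z) (cmod w)"
    unfolding mat_opnorm_def by (rule onorm_le) (rule Emat_norm_le)
next
  obtain v where v: "v \<noteq> 0" "norm (Emat z w *v v) = em_norm (cmod z) (cmod w) * norm v"
    by (rule Emat_norm_attained)
  have "norm (Emat z w *v v) \<le> onorm ((*v) (Emat z w)) * norm v"
    by (rule onorm) simp
  then show "em_norm (cmod z) (cmod w) \<le> mat_opnorm (Emat z w)"
    unfolding mat_opnorm_def using v by simp
qed

section \<open>Reduction of mu_E to the solutions of a21 w = 1 - s z + p z^2\<close>

lemma coercive_attains_min:
  fixes f :: "'a::{real_normed_vector,heine_borel} \<Rightarrow> real"
  assumes "closed Z" "y \<in> Z" "continuous_on Z f" "C \<ge> 0" "\<And>x. x \<in> Z \<Longrightarrow> norm x \<le> C * f x"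
  shows "\<exists>x0\<in>Z. \<forall>x\<in>Z. f x0 \<le> f x"
proof -
  define K where "K = Z \<inter> cball 0 (C * f y)"
  have "compact K" unfolding K_def using assms(1) by (intro closed_Int_compact compact_cball)
  moreover have "y \<in> K" unfolding K_def using assms(2,5) by simp
  moreover have "continuous_on K f" unfolding K_def using assms(3) by (rule continuous_on_subset) simp
  ultimately obtain x0 where x0: "x0 \<in> K" "\<forall>x\<in>K. f x0 \<le> f x"
    using continuous_attains_inf[of K f] by blast
  have "f x0 \<le> f x" if "x \<in> Z" for x
  proof (cases "x \<in> K")
    case False
    then have "C * f y < C * f x" using that assms(5)[of x] unfolding K_def by auto
    then have "f y < f x" using assms(4) by (simp add: mult_less_cancel_left)
    then show ?thesis using x0 \<open>y \<in> K\<close> by fastforce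
  qed (use x0 in blast)
  then show ?thesis using x0(1) unfolding K_def by blast
qed

lemma solution_norm_attains_min:
  fixes a s p :: complex
  assumes "a * w1 = 1 - s * z1 + p * z1^2"
  shows "\<exists>z0 w0. a * w0 = 1 - s * z0 + p * z0^2 \<and>
           (\<forall>z w. a * w = 1 - s * z + p * z^2 \<longrightarrow> em_norm (cmod z0) (cmod w0) \<le> em_norm (cmod z) (cmod w))"
proof -
  define Z where "Z = {x::complex\<times>complex. a * snd x = 1 - s * fst x + p * (fst x)^2}"
  define f where "f = (\<lambda>x::complex\<times>complex. em_norm (cmod (fst x)) (cmod (snd x)))"
  have coercive: "norm x \<le> 2 * f x" for x
  proof -
    have "norm x = sqrt ((cmod (fst x))^2 + (cmod (snd x))^2)"
      by (metis norm_Pair prod.collapse)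
    also have "\<dots> \<le> cmod (fst x) + cmod (snd x)" by (intro sqrt_sum_squares_le_sum) auto
    also have "\<dots> \<le> 2 * f x" unfolding f_def
      using em_norm_cmod_bounds(1,2)[where z="fst x" and w="snd x"] by linarith
    finally show ?thesis .
  qed
  have "closed Z" unfolding Z_def by (intro closed_Collect_eq continuous_intros)
  moreover have "(z1, w1) \<in> Z" unfolding Z_def using assms by simp
  moreover have "continuous_on Z f" unfolding f_def em_norm_def by (intro continuous_intros) auto
  ultimately have "\<exists>x0\<in>Z. \<forall>x\<in>Z. f x0 \<le> f x"
    using coercive by (intro coercive_attains_min[where y="(z1, w1)" and C=2]) auto
  then obtain x0 where "x0 \<in> Z" "\<forall>x\<in>Z. f x0 \<le> f x" by blast
  then show ?thesis unfolding Z_def f_def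
    by (intro exI[of _ "fst x0"] exI[of _ "snd x0"]) auto
qed

lemma singular_norms_eq:
  "{mat_opnorm X | X. X \<in> spaceE \<and> det (mat 1 - A ** X) = 0} =
   {em_norm (cmod z) (cmod w) | z w. A$2$1 * w = 1 - trace A * z + det A * z^2}"
proof -
  have singular: "det (mat 1 - A ** Emat z w) = 0 \<longleftrightarrow> A$2$1 * w = 1 - trace A * z + det A * z^2"
    for z w unfolding det_one_minus_mult_Emat by (auto simp: algebra_simps)
  show ?thesis unfolding spaceE_eq
  proof (intro set_eqI iffI)
    fix r assume "r \<in> {mat_opnorm X | X. X \<in> {Emat z w | z w. True} \<and> det (mat 1 - A ** X) = 0}"
    then obtain z w where "r = mat_opnorm (Emat z w)" "det (mat 1 - A ** Emat z w) = 0" by blast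
    then show "r \<in> {em_norm (cmod z) (cmod w) | z w. A$2$1 * w = 1 - trace A * z + det A * z^2}"
      unfolding singular mat_opnorm_Emat by blast
  next
    fix r assume "r \<in> {em_norm (cmod z) (cmod w) | z w. A$2$1 * w = 1 - trace A * z + det A * z^2}"
    then obtain z w where "r = mat_opnorm (Emat z w)" "det (mat 1 - A ** Emat z w) = 0"
      unfolding singular mat_opnorm_Emat by blast
    then show "r \<in> {mat_opnorm X | X. X \<in> {Emat z w | z w. True} \<and> det (mat 1 - A ** X) = 0}"
      by blast
  qed
qed

lemma inverse_Inf_compare_one:
  fixes S :: "real set"
  assumes "S = {} \<or> (\<exists>m\<in>S. 0 < m \<and> (\<forall>x\<in>S. m \<le> x))"
  shows "(if S = {} then 0 else 1 / Inf S) < 1 \<longleftrightarrow> (\<forall>x\<in>S. 1 < x)"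
    and "(if S = {} then 0 else 1 / Inf S) \<le> 1 \<longleftrightarrow> (\<forall>x\<in>S. 1 \<le> x)"
proof -
  have "(1 / Inf S < 1 \<longleftrightarrow> (\<forall>x\<in>S. 1 < x)) \<and> (1 / Inf S \<le> 1 \<longleftrightarrow> (\<forall>x\<in>S. 1 \<le> x))"
    if "m \<in> S" "0 < m" "\<forall>x\<in>S. m \<le> x" for m
  proof -
    have "Inf S = m" using that by (intro cInf_eq_minimum) auto
    then show ?thesis using that by (auto simp: divide_less_eq divide_le_eq intro: less_le_trans order_trans)
  qed
  then show "(if S = {} then 0 else 1 / Inf S) < 1 \<longleftrightarrow> (\<forall>x\<in>S. 1 < x)"
    and "(if S = {} then 0 else 1 / Inf S) \<le> 1 \<longleftrightarrow> (\<forall>x\<in>S. 1 \<le> x)"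
    using assms by auto
qed

lemma muE_compare_one:
  "muE A < 1 \<longleftrightarrow> (\<forall>z w. A$2$1 * w = 1 - trace A * z + det A * z^2 \<longrightarrow> 1 < cmod w + (cmod z)^2)"
  "muE A \<le> 1 \<longleftrightarrow> (\<forall>z w. A$2$1 * w = 1 - trace A * z + det A * z^2 \<longrightarrow> 1 \<le> cmod w + (cmod z)^2)"
proof -
  let ?P = "\<lambda>z w. A$2$1 * w = 1 - trace A * z + det A * z^2"
  define S where "S = {em_norm (cmod z) (cmod w) | z w. ?P z w}"
  have mu: "muE A = (if S = {} then 0 else 1 / Inf S)"
    unfolding muE_def S_def singular_norms_eq Let_def ..
  have positive_min: "\<exists>m\<in>S. 0 < m \<and> (\<forall>x\<in>S. m \<le> x)" if "S \<noteq> {}"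
  proof -
    obtain z1 w1 where "?P z1 w1" using \<open>S \<noteq> {}\<close> unfolding S_def by auto
    then obtain z0 w0 where m: "?P z0 w0"
      "\<forall>z w. ?P z w \<longrightarrow> em_norm (cmod z0) (cmod w0) \<le> em_norm (cmod z) (cmod w)"
      using solution_norm_attains_min by blast
    have "0 < cmod z0 \<or> 0 < cmod w0" using m(1) by auto
    then have "0 < em_norm (cmod z0) (cmod w0)"
      using em_norm_cmod_bounds(1,2)[where z=z0 and w=w0] by linarith
    then show ?thesis using m unfolding S_def by blast
  qed
  note compare = inverse_Inf_compare_one[of S, folded mu]
  have threshold: "1 \<le> em_norm (cmod z) (cmod w) \<longleftrightarrow> 1 \<le> cmod w + (cmod z)^2"
    "1 < em_norm (cmod z) (cmod w) \<longleftrightarrow> 1 < cmod w + (cmod z)^2" for z w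
    using em_norm_threshold[of "cmod z" "cmod w" 1] by simp_all
  show "muE A < 1 \<longleftrightarrow> (\<forall>z w. ?P z w \<longrightarrow> 1 < cmod w + (cmod z)^2)"
    "muE A \<le> 1 \<longleftrightarrow> (\<forall>z w. ?P z w \<longrightarrow> 1 \<le> cmod w + (cmod z)^2)"
    using compare positive_min threshold unfolding S_def by blast+
qed

section \<open>Zero-free quadratics and the symmetrised bidisc\<close>

lemma sum_product_roots_exist: "\<exists>\<alpha> \<beta>::complex. \<alpha> + \<beta> = s \<and> \<alpha> * \<beta> = p"
proof -
  define d where "d = csqrt (s^2 - 4*p)"
  have "d^2 = s^2 - 4*p" unfolding d_def by simp
  then have "((s + d)/2) * ((s - d)/2) = p" by (simp add: field_simps power2_eq_square)
  moreover have "(s + d)/2 + (s - d)/2 = s" by (simp add: field_simps)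
  ultimately show ?thesis by blast
qed

lemma quadratic_zero_iff:
  fixes \<alpha> \<beta> s p z :: complex
  assumes "\<alpha> + \<beta> = s" "\<alpha> * \<beta> = p"
  shows "1 - s*z + p*z^2 = 0 \<longleftrightarrow> \<alpha> * z = 1 \<or> \<beta> * z = 1"
proof -
  have "1 - s*z + p*z^2 = (1 - \<alpha>*z) * (1 - \<beta>*z)"
    unfolding assms[symmetric] by algebra
  then show ?thesis by auto
qed

lemma no_reciprocal_in_closed_disc:
  fixes \<alpha> :: complex
  shows "(\<forall>z. cmod z \<le> 1 \<longrightarrow> \<alpha> * z \<noteq> 1) \<longleftrightarrow> cmod \<alpha> < 1"
proof
  assume H: "\<forall>z. cmod z \<le> 1 \<longrightarrow> \<alpha> * z \<noteq> 1"
  show "cmod \<alpha> < 1"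
  proof (rule ccontr)
    assume "\<not> cmod \<alpha> < 1"
    then have "\<alpha> \<noteq> 0" "cmod (1 / \<alpha>) \<le> 1" by (auto simp: norm_divide divide_le_eq)
    then show False using H by auto
  qed
next
  assume "cmod \<alpha> < 1"
  then have "cmod (\<alpha> * z) < 1" if "cmod z \<le> 1" for z
    using that by (simp add: norm_mult) (meson le_less_trans mult_left_le_one_le norm_ge_zero
        less_imp_le mult_le_one dual_order.strict_trans1 mult_right_le_one_le)
  then show "\<forall>z. cmod z \<le> 1 \<longrightarrow> \<alpha> * z \<noteq> 1" by fastforce
qed

lemma no_reciprocal_in_open_disc:
  fixes \<alpha> :: complex
  shows "(\<forall>z. cmod z < 1 \<longrightarrow> \<alpha> * z \<noteq> 1) \<longleftrightarrow> cmod \<alpha> \<le> 1"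
proof
  assume H: "\<forall>z. cmod z < 1 \<longrightarrow> \<alpha> * z \<noteq> 1"
  show "cmod \<alpha> \<le> 1"
  proof (rule ccontr)
    assume "\<not> cmod \<alpha> \<le> 1"
    then have "\<alpha> \<noteq> 0" "cmod (1 / \<alpha>) < 1" by (auto simp: norm_divide divide_less_eq)
    then show False using H by auto
  qed
next
  assume "cmod \<alpha> \<le> 1"
  then have "cmod (\<alpha> * z) < 1" if "cmod z < 1" for z
    using that by (simp add: norm_mult) (meson le_less_trans mult_left_le_one_le norm_ge_zero)
  then show "\<forall>z. cmod z < 1 \<longrightarrow> \<alpha> * z \<noteq> 1" by fastforce
qed

lemma symm_bidisc_iff:
  "(s, p) \<in> symm_bidisc \<longleftrightarrow> (\<forall>z. cmod z \<le> 1 \<longrightarrow> 1 - s*z + p*z^2 \<noteq> 0)"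
proof -
  have roots: "(\<forall>z. cmod z \<le> 1 \<longrightarrow> 1 - s*z + p*z^2 \<noteq> 0) \<longleftrightarrow> cmod \<alpha> < 1 \<and> cmod \<beta> < 1"
    if "\<alpha> + \<beta> = s" "\<alpha> * \<beta> = p" for \<alpha> \<beta>
    using quadratic_zero_iff[OF that] no_reciprocal_in_closed_disc[of \<alpha>]
      no_reciprocal_in_closed_disc[of \<beta>] by blast
  obtain \<alpha> \<beta> where "\<alpha> + \<beta> = s" "\<alpha> * \<beta> = p" using sum_product_roots_exist by blast
  then show ?thesis unfolding symm_bidisc_def using roots by blast
qed

lemma symm_bidisc_closed_iff:
  "(s, p) \<in> symm_bidisc_closed \<longleftrightarrow> (\<forall>z. cmod z < 1 \<longrightarrow> 1 - s*z + p*z^2 \<noteq> 0)"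
proof -
  have roots: "(\<forall>z. cmod z < 1 \<longrightarrow> 1 - s*z + p*z^2 \<noteq> 0) \<longleftrightarrow> cmod \<alpha> \<le> 1 \<and> cmod \<beta> \<le> 1"
    if "\<alpha> + \<beta> = s" "\<alpha> * \<beta> = p" for \<alpha> \<beta>
    using quadratic_zero_iff[OF that] no_reciprocal_in_open_disc[of \<alpha>]
      no_reciprocal_in_open_disc[of \<beta>] by blast
  obtain \<alpha> \<beta> where "\<alpha> + \<beta> = s" "\<alpha> * \<beta> = p" using sum_product_roots_exist by blast
  then show ?thesis unfolding symm_bidisc_closed_def using roots by blast
qed

lemma solutions_above_strict_iff:
  fixes a q :: complex and c :: real
  assumes "c \<ge> 0"
  shows "(\<forall>w. a * w = q \<longrightarrow> c < cmod w) \<longleftrightarrow> cmod a * c < cmod q"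
proof (cases "a = 0")
  case True
  then show ?thesis using assms by (cases "q = 0") (auto intro: exI[of _ 0])
next
  case False
  then have "a * w = q \<longleftrightarrow> w = q / a" for w by (auto simp: field_simps)
  then have "(\<forall>w. a * w = q \<longrightarrow> c < cmod w) \<longleftrightarrow> c < cmod q / cmod a"
    by (simp add: norm_divide)
  then show ?thesis using False by (simp add: pos_less_divide_eq mult.commute)
qed

lemma solutions_above_iff:
  fixes a q :: complex and c :: real
  assumes "c > 0"
  shows "(\<forall>w. a * w = q \<longrightarrow> c \<le> cmod w) \<longleftrightarrow> q \<noteq> 0 \<and> cmod a * c \<le> cmod q"
proof (cases "a = 0")
  case True
  then show ?thesis using assms by (cases "q = 0") (auto intro: exI[of _ 0])
next
  case False
  then have "a * w = q \<longleftrightarrow> w = q / a" for w by (auto simp: field_simps)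
  then have "(\<forall>w. a * w = q \<longrightarrow> c \<le> cmod w) \<longleftrightarrow> c \<le> cmod q / cmod a"
    by (simp add: norm_divide)
  then show ?thesis using False assms by (auto simp: pos_le_divide_eq mult.commute)
qed

text \<open>Since |z|^2 \<ge> 1 outside the unit disc, only z in the closed (for the strict
  bound) or open (for the weak bound) disc impose a condition.\<close>
lemma solutions_strict_iff:
  fixes a s p :: complex
  shows "(\<forall>z w. a * w = 1 - s*z + p*z^2 \<longrightarrow> 1 < cmod w + (cmod z)^2) \<longleftrightarrow>
         (\<forall>z. cmod z \<le> 1 \<longrightarrow> cmod a * (1 - (cmod z)^2) < cmod (1 - s*z + p*z^2))"
proof -
  have "(\<forall>w. a * w = 1 - s*z + p*z^2 \<longrightarrow> 1 < cmod w + (cmod z)^2) \<longleftrightarrow>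
        (cmod z \<le> 1 \<longrightarrow> cmod a * (1 - (cmod z)^2) < cmod (1 - s*z + p*z^2))" for z
  proof (cases "cmod z \<le> 1")
    case True
    then have c: "0 \<le> 1 - (cmod z)^2" by (simp add: power_le_one)
    have shift: "1 < cmod w + (cmod z)^2 \<longleftrightarrow> 1 - (cmod z)^2 < cmod w" for w by linarith
    show ?thesis using True by (simp only: shift solutions_above_strict_iff[OF c] simp_thms)
  next
    case False
    then have "1 < (cmod z)^2" by (simp add: one_less_power)
    then show ?thesis using False by (smt (verit) norm_ge_zero)
  qed
  then show ?thesis by blast
qed

lemma solutions_weak_iff:
  fixes a s p :: complex
  shows "(\<forall>z w. a * w = 1 - s*z + p*z^2 \<longrightarrow> 1 \<le> cmod w + (cmod z)^2) \<longleftrightarrow>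
         (\<forall>z\<in>unit_disc. 1 - s*z + p*z^2 \<noteq> 0 \<and> cmod a * (1 - (cmod z)^2) \<le> cmod (1 - s*z + p*z^2))"
proof -
  have "(\<forall>w. a * w = 1 - s*z + p*z^2 \<longrightarrow> 1 \<le> cmod w + (cmod z)^2) \<longleftrightarrow>
        (z \<in> unit_disc \<longrightarrow> 1 - s*z + p*z^2 \<noteq> 0 \<and> cmod a * (1 - (cmod z)^2) \<le> cmod (1 - s*z + p*z^2))"
    for z
  proof (cases "z \<in> unit_disc")
    case True
    then have c: "0 < 1 - (cmod z)^2" by (simp add: unit_disc_def power_less_one_iff)
    have shift: "1 \<le> cmod w + (cmod z)^2 \<longleftrightarrow> 1 - (cmod z)^2 \<le> cmod w" for w by linarith
    show ?thesis using True by (simp only: shift solutions_above_iff[OF c] simp_thms)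
  next
    case False
    then have "1 \<le> (cmod z)^2" by (simp add: unit_disc_def one_le_power)
    then show ?thesis using False by (smt (verit) norm_ge_zero)
  qed
  then show ?thesis by blast
qed

text \<open>For g continuous on the closed disc and below c/k on the circle, the
  supremum over the open disc stays below c/k exactly when every value does:
  the maximum over the closed disc is attained, and not on the circle.\<close>
lemma disc_SUP_less_iff:
  fixes g :: "complex \<Rightarrow> real"
  assumes cont: "continuous_on (cball 0 1) g" and "k \<ge> 0"
    and circle: "\<And>z. cmod z = 1 \<Longrightarrow> k * g z < c"
  shows "k * (SUP z\<in>unit_disc. g z) < c \<longleftrightarrow> (\<forall>z\<in>unit_disc. k * g z < c)"
proof -
  obtain z0 where z0: "z0 \<in> cball 0 1" "\<forall>z\<in>cball 0 1. g z \<le> g z0"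
    using continuous_attains_sup[OF compact_cball _ cont] by auto
  have disc: "unit_disc \<subseteq> cball 0 1" "unit_disc \<noteq> {}" by (auto simp: unit_disc_def intro!: exI[of _ 0])
  have bdd: "bdd_above (g ` unit_disc)" using z0 disc by (auto intro!: bdd_aboveI[of _ "g z0"])
  show ?thesis
  proof
    assume "k * (SUP z\<in>unit_disc. g z) < c"
    moreover have "k * g z \<le> k * (SUP z\<in>unit_disc. g z)" if "z \<in> unit_disc" for z
      using cSUP_upper[OF that bdd] \<open>k \<ge> 0\<close> by (rule mult_left_mono)
    ultimately show "\<forall>z\<in>unit_disc. k * g z < c" by (meson le_less_trans)
  next
    assume inner: "\<forall>z\<in>unit_disc. k * g z < c"
    have "k * g z0 < c"
      using z0(1) inner circle by (cases "cmod z0 = 1") (auto simp: unit_disc_def)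
    moreover have "(SUP z\<in>unit_disc. g z) \<le> g z0" using disc z0 by (intro cSUP_least) auto
    ultimately show "k * (SUP z\<in>unit_disc. g z) < c"
      using \<open>k \<ge> 0\<close> by (meson le_less_trans mult_left_mono)
  qed
qed

text \<open>The strict pointwise bound on the closed disc: nonvanishing there gives
  (s,p) in G, and on the open disc the bound is the supremum bound.\<close>
lemma strict_bound_iff:
  fixes a s p :: complex
  shows "(\<forall>z. cmod z \<le> 1 \<longrightarrow> cmod a * (1 - (cmod z)^2) < cmod (1 - s*z + p*z^2)) \<longleftrightarrow>
         (s, p) \<in> symm_bidisc \<and>
         cmod a * (SUP z\<in>unit_disc. (1 - (cmod z)^2) / cmod (1 - s*z + p*z^2)) < 1"
proof -
  let ?Q = "\<lambda>z. 1 - s*z + p*z^2"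
  let ?g = "\<lambda>z. (1 - (cmod z)^2) / cmod (?Q z)"
  have ratio: "cmod a * (1 - (cmod z)^2) < cmod (?Q z) \<longleftrightarrow> cmod a * ?g z < 1" if "?Q z \<noteq> 0" for z
    using that by (simp add: field_simps)
  have sup: "cmod a * (SUP z\<in>unit_disc. ?g z) < 1 \<longleftrightarrow> (\<forall>z\<in>unit_disc. cmod a * ?g z < 1)"
    if "\<forall>z. cmod z \<le> 1 \<longrightarrow> ?Q z \<noteq> 0"
    using that by (intro disc_SUP_less_iff continuous_intros) auto
  show ?thesis
  proof
    assume bound: "\<forall>z. cmod z \<le> 1 \<longrightarrow> cmod a * (1 - (cmod z)^2) < cmod (?Q z)"
    have nonzero: "\<forall>z. cmod z \<le> 1 \<longrightarrow> ?Q z \<noteq> 0"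
    proof (intro allI impI)
      fix z :: complex assume "cmod z \<le> 1"
      then have "0 \<le> cmod a * (1 - (cmod z)^2)" by (simp add: power_le_one)
      then show "?Q z \<noteq> 0" using bound \<open>cmod z \<le> 1\<close> by fastforce
    qed
    moreover have "\<forall>z\<in>unit_disc. cmod a * ?g z < 1"
    proof
      fix z assume "z \<in> unit_disc"
      then have "cmod z \<le> 1" by (simp add: unit_disc_def)
      then show "cmod a * ?g z < 1" using bound nonzero ratio by blast
    qed
    ultimately show "(s, p) \<in> symm_bidisc \<and> cmod a * (SUP z\<in>unit_disc. ?g z) < 1"
      using sup symm_bidisc_iff by blast
  next
    assume "(s, p) \<in> symm_bidisc \<and> cmod a * (SUP z\<in>unit_disc. ?g z) < 1"
    then have nonzero: "\<forall>z. cmod z \<le> 1 \<longrightarrow> ?Q z \<noteq> 0"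
      and inner: "\<forall>z\<in>unit_disc. cmod a * ?g z < 1"
      using sup symm_bidisc_iff by blast+
    show "\<forall>z. cmod z \<le> 1 \<longrightarrow> cmod a * (1 - (cmod z)^2) < cmod (?Q z)"
    proof (intro allI impI)
      fix z :: complex assume "cmod z \<le> 1"
      show "cmod a * (1 - (cmod z)^2) < cmod (?Q z)"
      proof (cases "cmod z = 1")
        case True
        then show ?thesis using nonzero by simp
      next
        case False
        then have "z \<in> unit_disc" using \<open>cmod z \<le> 1\<close> by (simp add: unit_disc_def)
        then show ?thesis using nonzero inner ratio \<open>cmod z \<le> 1\<close> by blast
      qed
    qed
  qed
qed

lemma weak_bound_iff:
  fixes a s p :: complex
  shows "(\<forall>z\<in>unit_disc. 1 - s*z + p*z^2 \<noteq> 0 \<and> cmod a * (1 - (cmod z)^2) \<le> cmod (1 - s*z + p*z^2))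
     \<longleftrightarrow> (s, p) \<in> symm_bidisc_closed \<and>
         (\<forall>z\<in>unit_disc. cmod a * (1 - (cmod z)^2) / cmod (1 - s*z + p*z^2) \<le> 1)"
proof -
  have "cmod a * (1 - (cmod z)^2) \<le> cmod (1 - s*z + p*z^2) \<longleftrightarrow>
        cmod a * (1 - (cmod z)^2) / cmod (1 - s*z + p*z^2) \<le> 1" if "1 - s*z + p*z^2 \<noteq> 0" for z
    using that by (simp add: divide_le_eq_1)
  then show ?thesis unfolding symm_bidisc_closed_iff unit_disc_def by auto
qed

theorem proposition3p1:
  fixes A :: "complex^2^2"
  defines "s \<equiv> trace A" and "p \<equiv> det A"
  shows "(muE A < 1 \<longleftrightarrow>
            (s, p) \<in> symm_bidisc \<and>
            cmod (A $ 2 $ 1) *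
              (SUP z\<in>unit_disc. (1 - (cmod z)\<^sup>2) / cmod (1 - s * z + p * z\<^sup>2)) < 1)
       \<and> (muE A \<le> 1 \<longleftrightarrow>
            (s, p) \<in> symm_bidisc_closed \<and>
            (\<forall>z\<in>unit_disc. cmod (A $ 2 $ 1) * (1 - (cmod z)\<^sup>2) / cmod (1 - s * z + p * z\<^sup>2) \<le> 1))"
proof
  show "muE A < 1 \<longleftrightarrow> (s, p) \<in> symm_bidisc \<and>
      cmod (A $ 2 $ 1) * (SUP z\<in>unit_disc. (1 - (cmod z)\<^sup>2) / cmod (1 - s * z + p * z\<^sup>2)) < 1"
    unfolding muE_compare_one(1) solutions_strict_iff strict_bound_iff s_def p_def ..
  show "muE A \<le> 1 \<longleftrightarrow> (s, p) \<in> symm_bidisc_closed \<and>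
      (\<forall>z\<in>unit_disc. cmod (A $ 2 $ 1) * (1 - (cmod z)\<^sup>2) / cmod (1 - s * z + p * z\<^sup>2) \<le> 1)"
    unfolding muE_compare_one(2) solutions_weak_iff weak_bound_iff s_def p_def ..
qed

end
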